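(* Let $\mathbb{K}$ be a field equipped with a non-Archimedean valuation $|\cdot|$, and assume that the characteristic of $\mathbb{K}$ is not $2$. Let $\mathcal{X}$ be a non-Archimedean linear space over $\mathbb{K}$ with non-Archimedean norm $\|\cdot\|$. Write $|2|$ for the valuation of the element $2=1+1\in\mathbb{K}$ (a positive real number). Then for all $x, y \in \mathcal{X}$, \begin{align*} \Big|\|x\|-\|y\|\Big| &\leq \frac{2}{|2|}\max\{\|x-y\|, \|x+y\|\}-(\|x\|+\|y\|)\\ &\leq \frac{2}{|2|}\max\{\|x\|, \|y\|\}-(\|x\|+\|y\|) \end{align*} and \begin{align*} \Big|\|x\|-\|y\|\Big| \leq \|x\|+\|y\|-\frac{2}{|2|}\Big|\|x+y\|-\|x-y\|\Big|. \end{align*} In particular, if $|2|=1$, then for all $x,y\in\mathcal{X}$, \begin{align*} \Big|\|x\|-\|y\|\Big| &\leq 2\max\{\|x-y\|, \|x+y\|\}-(\|x\|+\|y\|)\leq 2\max\{\|x\|, \|y\|\}-(\|x\|+\|y\|) \end{align*} and \begin{align*} \Big|\|x\|-\|y\|\Big| \leq \|x\|+\|y\|-2\Big|\|x+y\|-\|x-y\|\Big|. \end{align*}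
   Context: A non-Archimedean valuation on a field $\mathbb{K}$ is a map $|\cdot|:\mathbb{K}\to[0,\infty)$ such that: (i) $|\lambda|=0$ implies $\lambda=0$; (ii) $|\lambda\mu|=|\lambda||\mu|$ for all $\lambda,\mu\in\mathbb{K}$; (iii) $|\lambda+\mu|\le\max\{|\lambda|,|\mu|\}$ for all $\lambda,\mu\in\mathbb{K}$. A non-Archimedean linear space over such a field $\mathbb{K}$ is a vector space $\mathcal{X}$ over $\mathbb{K}$ with a map $\|\cdot\|:\mathcal{X}\to[0,\infty)$ such that: (i) $\|x\|=0$ implies $x=0$; (ii) $\|\lambda x\|=|\lambda|\|x\|$ for all $\lambda\in\mathbb{K}$, $x\in\mathcal{X}$; (iii) $\|x+y\|\le\max\{\|x\|,\|y\|\}$ for all $x,y\in\mathcal{X}$. In the statement, the numerator $2$ in $\frac{2}{|2|}$ is the real number $2$, and the outer absolute values $|\cdot|$ applied to differences of norms are ordinary real absolute values. *)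

theory Defs
  imports Complex_Main
begin

definition nonarch_valuation :: "('k::field \<Rightarrow> real) \<Rightarrow> bool" where
  "nonarch_valuation v \<longleftrightarrow>
     (\<forall>a. 0 \<le> v a) \<and>
     (\<forall>a. v a = 0 \<longrightarrow> a = 0) \<and>
     (\<forall>a b. v (a * b) = v a * v b) \<and>
     (\<forall>a b. v (a + b) \<le> max (v a) (v b))"

definition nonarch_norm ::
  "('k::field \<Rightarrow> real) \<Rightarrow> ('k \<Rightarrow> 'x \<Rightarrow> 'x) \<Rightarrow> ('x::ab_group_add \<Rightarrow> real) \<Rightarrow> bool" where
  "nonarch_norm v scale N \<longleftrightarrow>
     (\<forall>x. 0 \<le> N x) \<and>
     (\<forall>x. N x = 0 \<longrightarrow> x = 0) \<and>
     (\<forall>a x. N (scale a x) = v a * N x) \<and>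
     (\<forall>x y. N (x + y) \<le> max (N x) (N y))"

end

theory Submission
  imports Defs
begin

text \<open>Since \<open>2x = (x + y) + (x - y)\<close> and \<open>2y = (x + y) - (x - y)\<close>, the ultrametric inequality
  gives \<open>|2| max {\<parallel>x\<parallel>, \<parallel>y\<parallel>} \<le> max {\<parallel>x - y\<parallel>, \<parallel>x + y\<parallel>} \<le> max {\<parallel>x\<parallel>, \<parallel>y\<parallel>}\<close>. It also gives the
  reverse triangle inequality \<open>|\<parallel>u + w\<parallel> - \<parallel>u\<parallel>| \<le> \<parallel>w\<parallel>\<close>; applied to \<open>x + y = (x - y) + 2y\<close>
  it bounds \<open>|\<parallel>x + y\<parallel> - \<parallel>x - y\<parallel>|\<close> by \<open>|2| min {\<parallel>x\<parallel>, \<parallel>y\<parallel>}\<close>. The claims follow from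
  \<open>|\<parallel>x\<parallel> - \<parallel>y\<parallel>| = 2 max {\<parallel>x\<parallel>, \<parallel>y\<parallel>} - (\<parallel>x\<parallel> + \<parallel>y\<parallel>) = \<parallel>x\<parallel> + \<parallel>y\<parallel> - 2 min {\<parallel>x\<parallel>, \<parallel>y\<parallel>}\<close>.\<close>

lemma nonarch_valuationD:
  assumes "nonarch_valuation v"
  shows "0 \<le> v a" and "v a = 0 \<Longrightarrow> a = 0" and "v (a * b) = v a * v b"
  using assms unfolding nonarch_valuation_def by blast+

lemma nonarch_valuation_one:
  assumes "nonarch_valuation v"
  shows "v 1 = 1"
proof -
  have "v 1 * v 1 = v 1"
    using nonarch_valuationD(3)[OF assms, of 1 1] by simp
  moreover have "v 1 \<noteq> 0"
    using nonarch_valuationD(2)[OF assms, of 1] by auto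
  ultimately show ?thesis by simp
qed

lemma nonarch_valuation_minus_one:
  assumes "nonarch_valuation v"
  shows "v (-1) = 1"
proof -
  have "v (-1) ^ 2 = 1"
    using nonarch_valuationD(3)[OF assms, of "-1" "-1"] nonarch_valuation_one[OF assms]
    by (simp add: power2_eq_square)
  with nonarch_valuationD(1)[OF assms, of "-1"] show ?thesis
    by (simp add: power2_eq_1_iff)
qed

lemma nonarch_valuation_pos:
  assumes "nonarch_valuation v" and "a \<noteq> 0"
  shows "0 < v a"
  using nonarch_valuationD(1,2)[OF assms(1), of a] assms(2) by (auto simp: less_le)

locale nonarch_normed_space = vector_space scale
  for scale :: "'k::field \<Rightarrow> 'x::ab_group_add \<Rightarrow> 'x" +
  fixes v :: "'k \<Rightarrow> real" and N :: "'x \<Rightarrow> real"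
  assumes valuation: "nonarch_valuation v"
    and norm: "nonarch_norm v scale N"
begin

lemma norm_nonneg: "0 \<le> N x"
  using norm unfolding nonarch_norm_def by simp

lemma norm_scale: "N (scale a x) = v a * N x"
  using norm unfolding nonarch_norm_def by simp

lemma norm_add_le_max: "N (x + y) \<le> max (N x) (N y)"
  using norm unfolding nonarch_norm_def by simp

lemma norm_minus: "N (- x) = N x"
  using norm_scale[of "-1" x] nonarch_valuation_minus_one[OF valuation]
  by (simp add: scale_minus_left)

lemma norm_minus_commute: "N (x - y) = N (y - x)"
  using norm_minus[of "y - x"] by simp

lemma norm_diff_le_max: "N (x - y) \<le> max (N x) (N y)"
  using norm_add_le_max[of x "- y"] by (simp add: norm_minus)

lemma norm_double: "N (x + x) = v 2 * N x"
proof -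
  have "scale 2 x = x + x"
    using scale_left_distrib[of 1 1 x] by (simp add: one_add_one)
  then show ?thesis
    using norm_scale[of 2 x] by simp
qed

lemma abs_norm_add_diff_le: "\<bar>N (x + y) - N x\<bar> \<le> N y"
proof -
  have "N (x + y) \<le> max (N x) (N y)"
    by (rule norm_add_le_max)
  moreover have "N x \<le> max (N (x + y)) (N y)"
    using norm_diff_le_max[of "x + y" y] by simp
  ultimately show ?thesis
    using norm_nonneg[of x] norm_nonneg[of y] norm_nonneg[of "x + y"] by linarith
qed

lemma valuation_two_mult_max_le:
  "v 2 * max (N x) (N y) \<le> max (N (x - y)) (N (x + y))"
proof -
  have "v 2 * N x \<le> max (N (x - y)) (N (x + y))"
    using norm_add_le_max[of "x - y" "x + y"] by (simp add: norm_double[symmetric])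
  moreover have "v 2 * N y \<le> max (N (x - y)) (N (x + y))"
    using norm_diff_le_max[of "x + y" "x - y"]
    by (simp add: norm_double[symmetric] max.commute)
  ultimately show ?thesis
    by (cases "N x \<le> N y") (simp_all add: max_def)
qed

lemma max_norm_diff_add_le: "max (N (x - y)) (N (x + y)) \<le> max (N x) (N y)"
  using norm_diff_le_max norm_add_le_max by simp

lemma abs_norm_add_minus_norm_diff_le:
  "\<bar>N (x + y) - N (x - y)\<bar> \<le> v 2 * min (N x) (N y)"
proof -
  have "\<bar>N (x + y) - N (x - y)\<bar> \<le> v 2 * N y" for x y
    using abs_norm_add_diff_le[of "x - y" "y + y"] by (simp add: norm_double)
  from this[of x y] this[of y x] show ?thesis
    by (simp add: add.commute norm_minus_commute)
qed

lemma norm_bounds: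
  assumes "(2::'k) \<noteq> 0"
  shows "\<bar>N x - N y\<bar> \<le> (2 / v 2) * max (N (x - y)) (N (x + y)) - (N x + N y)"
    and "(2 / v 2) * max (N (x - y)) (N (x + y)) - (N x + N y)
           \<le> (2 / v 2) * max (N x) (N y) - (N x + N y)"
    and "\<bar>N x - N y\<bar> \<le> N x + N y - (2 / v 2) * \<bar>N (x + y) - N (x - y)\<bar>"
proof -
  have v2: "0 < v 2"
    using nonarch_valuation_pos[OF valuation assms] .
  have "2 * max (N x) (N y) = (2 / v 2) * (v 2 * max (N x) (N y))"
    using v2 by simp
  also have "\<dots> \<le> (2 / v 2) * max (N (x - y)) (N (x + y))"
    using valuation_two_mult_max_le v2 by (intro mult_left_mono) auto
  finally show "\<bar>N x - N y\<bar> \<le> (2 / v 2) * max (N (x - y)) (N (x + y)) - (N x + N y)"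
    using max.cobounded1[of "N x" "N y"] max.cobounded2[of "N y" "N x"]
    unfolding abs_le_iff by linarith
  have "(2 / v 2) * max (N (x - y)) (N (x + y)) \<le> (2 / v 2) * max (N x) (N y)"
    using max_norm_diff_add_le v2 by (intro mult_left_mono) auto
  then show "(2 / v 2) * max (N (x - y)) (N (x + y)) - (N x + N y)
      \<le> (2 / v 2) * max (N x) (N y) - (N x + N y)"
    by (rule diff_right_mono)
  have "(2 / v 2) * \<bar>N (x + y) - N (x - y)\<bar> \<le> (2 / v 2) * (v 2 * min (N x) (N y))"
    using abs_norm_add_minus_norm_diff_le v2 by (intro mult_left_mono) auto
  also have "\<dots> = 2 * min (N x) (N y)"
    using v2 by simp
  finally show "\<bar>N x - N y\<bar> \<le> N x + N y - (2 / v 2) * \<bar>N (x + y) - N (x - y)\<bar>"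
    using min.cobounded1[of "N x" "N y"] min.cobounded2[of "N y" "N x"]
    unfolding abs_le_iff by linarith
qed

end

theorem theorem2p1:
  fixes v :: "'k::field \<Rightarrow> real"
    and scale :: "'k \<Rightarrow> 'x::ab_group_add \<Rightarrow> 'x"
    and N :: "'x \<Rightarrow> real"
  assumes val: "nonarch_valuation v"
    and char: "(2::'k) \<noteq> 0"
    and vs: "vector_space scale"
    and nrm: "nonarch_norm v scale N"
  shows "(\<forall>x y.
            \<bar>N x - N y\<bar> \<le> (2 / v 2) * max (N (x - y)) (N (x + y)) - (N x + N y) \<and>
            (2 / v 2) * max (N (x - y)) (N (x + y)) - (N x + N y)
              \<le> (2 / v 2) * max (N x) (N y) - (N x + N y) \<and>
            \<bar>N x - N y\<bar> \<le> N x + N y - (2 / v 2) * \<bar>N (x + y) - N (x - y)\<bar>)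
       \<and>
         (v 2 = 1 \<longrightarrow> (\<forall>x y.
            \<bar>N x - N y\<bar> \<le> 2 * max (N (x - y)) (N (x + y)) - (N x + N y) \<and>
            2 * max (N (x - y)) (N (x + y)) - (N x + N y) \<le> 2 * max (N x) (N y) - (N x + N y) \<and>
            \<bar>N x - N y\<bar> \<le> N x + N y - 2 * \<bar>N (x + y) - N (x - y)\<bar>))"
proof -
  interpret nonarch_normed_space scale v N
    by (intro nonarch_normed_space.intro nonarch_normed_space_axioms.intro vs val nrm)
  show ?thesis
    using norm_bounds[OF char] by (intro conjI impI allI) (simp_all only: div_by_1)
qed

end
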